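(* Let $S^2\subset\mathbb{R}^3$ be the round unit sphere, let $l\colon S^3\to T^1S^2$ be the $2:1$ covering map described in the context, and let $\gamma(t)=(\cos t,\sin t,0)$, $t\in\mathbb{R}/2\pi\mathbb{Z}$, be the positively oriented equator. Let $p\in\mathbb{N}$, $q\in\mathbb{N}_0$ be coprime and let $\gamma_{p,q}$ be a $(p,q)$-satellite of $\gamma$. Then the lift of $\gamma_{p,q}$ under $l$ (i.e. a closed curve in $S^3$ projecting under $l$ onto the tangent lift of $\gamma_{p,q}$, traversed twice when $p$ is odd) is homotopic in $S^3\setminus l^{-1}(\gamma,\dot\gamma)=S^3\setminus\{(z,0):|z|=1\}$ to the curve \[t\mapsto \big(c_1e^{i\frac{pt}{2}},\,c_2e^{i\frac{(p-2q)t}{2}}\big),\] for any $c_1,c_2\in\mathbb{R}_{>0}$ with $c_1^2+c_2^2=1$, where $t$ ranges over $\mathbb{R}/2\pi\mathbb{Z}$ if $p$ is even and over $\mathbb{R}/4\pi\mathbb{Z}$ if $p$ is odd.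
   Context: Write $S^3=\{(r_1e^{it_1},r_2e^{it_2}): r_1,r_2\in[0,1],\ r_1^2+r_2^2=1,\ t_1,t_2\in\mathbb{R}/2\pi\mathbb{Z}\}\subset\mathbb{C}^2$, and $T^1S^2=\{(x,u): x\in S^2,\ u\in T_xS^2,\ |u|=1\}$. Euler angles: for $u\in T^1S^2$ not tangent (in either direction) to the equator $\{z=0\}$, $u$ determines an oriented great circle meeting the equator in two points; let $p$ be the one at which the great circle enters the upper hemisphere. Let $\phi(u)\in\mathbb{R}/2\pi\mathbb{Z}$ be the angle between the $x$-axis and $p$, $\theta(u)\in\mathbb{R}/2\pi\mathbb{Z}$ the angle along the oriented great circle from $p$ to the basepoint of $u$, and $\nu(u)\in(0,\pi)$ the angle at $p$ between the tangent of the positively oriented equator and the tangent of the oriented great circle. Then $\Phi_1(u)=(\phi,\theta,\nu)$ is a diffeomorphism from $T^1S^2$ minus the tangent lifts of the two oriented equators onto $\mathbb{R}/2\pi\mathbb{Z}\times\mathbb{R}/2\pi\mathbb{Z}\times(0,\pi)$. Let $\Phi_2(r_1e^{it_1},r_2e^{it_2})=(t_1+t_2,\,t_1-t_2,\,2\arccos r_1)$ on $S^3\setminus\{(z,0),(0,z)\}$. The map $l$ is the smooth extension of $\Phi_1^{-1}\circ\Phi_2$ to all of $S^3$, sending $(e^{it},0)$ to the (doubly traversed) tangent lift of the positively oriented equator and $(0,e^{-it})$ to that of the negatively oriented equator; it is a $2:1$ covering. Satellites: for a regular closed curve $c$ on a surface $S$ its tangent lift is $t\mapsto (c(t),\dot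 c(t)/|\dot c(t)|)\in T^1S$. Let $\gamma\colon\mathbb{R}/2\pi\mathbb{Z}\to S$ be a regular curve with a unit normal field $\eta(t)$ along it, and let $p\in\mathbb{N}$, $q\in\mathbb{N}_0$ be coprime. A curve on $S$ is a $(p,q)$-satellite of $\gamma$ if its tangent lift is homotopic, through tangent lifts of immersed curves, in $T^1S$ minus the tangent lift of $\gamma$, to the tangent lift of $t\mapsto \exp_{\gamma(pt)}(\epsilon\sin(qt)\,\eta(pt))$, $t\in\mathbb{R}/2\pi\mathbb{Z}$, for small $\epsilon>0$. *)

theory Defs
  imports "HOL-Analysis.Analysis"
begin

definition vec3 :: "real \<Rightarrow> real \<Rightarrow> real \<Rightarrow> real^3" where
  "vec3 a b c = (\<chi> i. if i = 1 then a else if i = 2 then b else c)"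

definition S2 :: "(real^3) set" where
  "S2 = sphere 0 1"

definition S3 :: "(complex \<times> complex) set" where
  "S3 = sphere 0 1"

definition T1S2 :: "((real^3) \<times> (real^3)) set" where
  "T1S2 = {(x, u). x \<in> S2 \<and> x \<bullet> u = 0 \<and> norm u = 1}"

text \<open>Inverse of the Euler angle chart Phi_1: (phi, theta, nu) gives the unit tangent
  vector at the point reached after angle theta along the oriented great circle through
  p = (cos phi, sin phi, 0) whose tangent at p makes angle nu with the positive equator.\<close>
definition euler_inv :: "real \<Rightarrow> real \<Rightarrow> real \<Rightarrow> (real^3) \<times> (real^3)" where
  "euler_inv \<phi> \<theta> \<nu> =
    (let p = vec3 (cos \<phi>) (sin \<phi>) 0;
         w = cos \<nu> *\<^sub>R vec3 (- sin \<phi>) (cos \<phi>) 0 + sin \<nu> *\<^sub>R vec3 0 0 1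
     in (cos \<theta> *\<^sub>R p + sin \<theta> *\<^sub>R w, - sin \<theta> *\<^sub>R p + cos \<theta> *\<^sub>R w))"

text \<open>The covering map l = Phi_1^{-1} o Phi_2, with Phi_2(r1 e^{i t1}, r2 e^{i t2}) =
  (t1+t2, t1-t2, 2 arccos r1).  The formula is well defined on all of S^3 (when r1 = 0 or
  r2 = 0 it does not depend on the undetermined argument) and coincides there with the
  smooth extension; in coordinates it equals
  ((z1^2+z2^2, 2 Im(z1 cnj z2)), (i(z1^2-z2^2), 2 Re(z1 cnj z2))).\<close>
definition lmap :: "complex \<times> complex \<Rightarrow> (real^3) \<times> (real^3)" where
  "lmap z = euler_inv (Arg (fst z) + Arg (snd z)) (Arg (fst z) - Arg (snd z))
                      (2 * arccos (norm (fst z)))"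

definition regular_closed_curve_S2 :: "(real \<Rightarrow> real^3) \<Rightarrow> bool" where
  "regular_closed_curve_S2 c \<longleftrightarrow>
     (\<forall>t. c (t + 2*pi) = c t) \<and> (\<forall>t. c t \<in> S2) \<and>
     (\<exists>c'. (\<forall>t. (c has_vector_derivative c' t) (at t)) \<and> continuous_on UNIV c' \<and>
           (\<forall>t. c' t \<noteq> 0))"

definition tangent_lift :: "(real \<Rightarrow> real^3) \<Rightarrow> real \<Rightarrow> (real^3) \<times> (real^3)" where
  "tangent_lift c t = (c t, (1 / norm (vector_derivative c (at t))) *\<^sub>R vector_derivative c (at t))"

definition equator :: "real \<Rightarrow> real^3" where
  "equator t = vec3 (cos t) (sin t) 0"

definition sphere_exp :: "real^3 \<Rightarrow> real^3 \<Rightarrow> real^3" where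
  "sphere_exp x v = (if v = 0 then x else cos (norm v) *\<^sub>R x + (sin (norm v) / norm v) *\<^sub>R v)"

definition unit_normal_field :: "(real \<Rightarrow> real^3) \<Rightarrow> (real \<Rightarrow> real^3) \<Rightarrow> bool" where
  "unit_normal_field \<gamma> \<eta> \<longleftrightarrow> continuous_on UNIV \<eta> \<and> (\<forall>t. \<eta> (t + 2*pi) = \<eta> t) \<and>
     (\<forall>t. norm (\<eta> t) = 1 \<and> \<eta> t \<bullet> \<gamma> t = 0 \<and> \<eta> t \<bullet> vector_derivative \<gamma> (at t) = 0)"

definition model_satellite ::
  "(real \<Rightarrow> real^3) \<Rightarrow> (real \<Rightarrow> real^3) \<Rightarrow> nat \<Rightarrow> nat \<Rightarrow> real \<Rightarrow> real \<Rightarrow> real^3" where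
  "model_satellite \<gamma> \<eta> p q \<epsilon> t =
     sphere_exp (\<gamma> (real p * t)) ((\<epsilon> * sin (real q * t)) *\<^sub>R \<eta> (real p * t))"

definition lift_homotopic ::
  "(real \<Rightarrow> real^3) \<Rightarrow> (real \<Rightarrow> real^3) \<Rightarrow> (real \<Rightarrow> real^3) \<Rightarrow> bool" where
  "lift_homotopic \<gamma> a b \<longleftrightarrow>
     (\<exists>c :: real \<Rightarrow> real \<Rightarrow> real^3.
        c 0 = a \<and> c 1 = b \<and>
        (\<forall>s\<in>{0..1}. regular_closed_curve_S2 (c s)) \<and>
        continuous_on ({0..1} \<times> UNIV) (\<lambda>(s, t). tangent_lift (c s) t) \<and>
        (\<forall>s\<in>{0..1}. \<forall>t. tangent_lift (c s) t \<in> T1S2 - range (tangent_lift \<gamma>)))"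

definition is_satellite ::
  "(real \<Rightarrow> real^3) \<Rightarrow> (real \<Rightarrow> real^3) \<Rightarrow> nat \<Rightarrow> nat \<Rightarrow> (real \<Rightarrow> real^3) \<Rightarrow> bool" where
  "is_satellite \<gamma> \<eta> p q c \<longleftrightarrow>
     regular_closed_curve_S2 c \<and>
     (\<exists>\<epsilon>0>0. \<forall>\<epsilon>. 0 < \<epsilon> \<and> \<epsilon> < \<epsilon>0 \<longrightarrow> lift_homotopic \<gamma> c (model_satellite \<gamma> \<eta> p q \<epsilon>))"

end

theory Submission
  imports Defs
begin

text \<open>Write points of S3 as (z1, z2).  The complex function hopf_B (x, u) = x + i u on T1S2
  pulls back under lmap to 2 z2^2 and vanishes on T1S2 exactly along the lift of the positive
  equator.  Its winding number along tangent lifts is therefore invariant under the homotopies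
  allowed in the definition of a satellite, and on the model satellite it equals p - 2q; for
  q = 0 the model runs along the equator itself, so no satellite exists.  Hence z2 winds
  (p - 2q)/2 times per period along the lift, which closes up after one period if p is even and
  after two if p is odd.  Finally, S3 minus the circle z2 = 0 retracts onto the circle z1 = 0,
  so loops there are classified by the winding of z2.\<close>

definition periodic_winding :: "(real \<Rightarrow> complex) \<Rightarrow> int \<Rightarrow> bool" where
  "periodic_winding f k \<longleftrightarrow> (\<exists>g. continuous_on UNIV g \<and> (\<forall>t. f t = exp (g t)) \<and>
      (\<forall>t. g (t + 2*pi) = g t + 2 * complex_of_real pi * \<i> * of_int k))"

lemma Ints_valued_continuous_constant:
  fixes f :: "'a::topological_space \<Rightarrow> complex"
  assumes "connected S" "continuous_on S f" "\<And>x. x \<in> S \<Longrightarrow> f x \<in> \<int>"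
  shows "f constant_on S"
proof (rule continuous_discrete_range_constant[OF assms(1,2)])
  fix x assume x: "x \<in> S"
  show "\<exists>e>0. \<forall>y. y \<in> S \<and> f y \<noteq> f x \<longrightarrow> e \<le> norm (f y - f x)"
  proof (intro exI[of _ 1] conjI allI impI)
    fix y assume y: "y \<in> S \<and> f y \<noteq> f x"
    obtain a where a: "f x = of_int a" using assms(3)[OF x] Ints_cases by metis
    obtain b where b: "f y = of_int b" using assms(3) y Ints_cases by metis
    have "a \<noteq> b" using a b y by auto
    then have "1 \<le> \<bar>b - a\<bar>" by linarith
    also have "\<bar>b - a\<bar> = norm (of_int (b - a) :: complex)" by (simp only: norm_of_int)
    also have "\<dots> = norm (f y - f x)" using a b by simp
    finally show "1 \<le> norm (f y - f x)" by simp
  qed simp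
qed

lemma continuous_logarithms_differ_by_constant:
  fixes g h :: "'a::topological_space \<Rightarrow> complex"
  assumes "connected S" "S \<noteq> {}" "continuous_on S g" "continuous_on S h"
    and "\<And>x. x \<in> S \<Longrightarrow> exp (h x) = exp (g x)"
  obtains k :: int where "\<And>x. x \<in> S \<Longrightarrow> h x = g x + 2 * complex_of_real pi * \<i> * of_int k"
proof -
  have Ints: "(h x - g x) / (2 * complex_of_real pi * \<i>) \<in> \<int>" if x: "x \<in> S" for x
  proof -
    obtain n :: int where "h x = g x + complex_of_real (of_int (2 * n) * pi) * \<i>"
      using exp_eq[THEN iffD1, OF assms(5)[OF x]] by blast
    then show ?thesis by (simp add: field_simps)
  qed
  have "(\<lambda>x. (h x - g x) / (2 * complex_of_real pi * \<i>)) constant_on S"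
    by (rule Ints_valued_continuous_constant[OF assms(1)])
      (use assms(3,4) Ints in \<open>auto intro!: continuous_intros\<close>)
  then obtain c where c: "\<And>x. x \<in> S \<Longrightarrow> (h x - g x) / (2 * complex_of_real pi * \<i>) = c"
    unfolding constant_on_def by blast
  obtain x0 where "x0 \<in> S" using assms(2) by blast
  then obtain k where k: "c = of_int k" using c Ints by (metis Ints_cases)
  show thesis
    by (rule that[of k]) (use c k in \<open>auto simp: field_simps\<close>)
qed

lemma periodic_winding_logarithm:
  assumes "periodic_winding f k" "continuous_on UNIV h" "\<And>t. f t = exp (h t)"
  shows "h (t + 2*pi) = h t + 2 * complex_of_real pi * \<i> * of_int k"
proof -
  obtain g where g: "continuous_on UNIV g" "\<And>t. f t = exp (g t)"
      "\<And>t. g (t + 2*pi) = g t + 2 * complex_of_real pi * \<i> * of_int k"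
    using assms(1) unfolding periodic_winding_def by blast
  obtain m :: int where "\<And>x. h x = g x + 2 * complex_of_real pi * \<i> * of_int m"
    by (rule continuous_logarithms_differ_by_constant[of UNIV g h]) (use g assms in auto)
  then show ?thesis using g(3)[of t] by simp
qed

lemma periodic_winding_mult:
  "periodic_winding f k \<Longrightarrow> periodic_winding h m \<Longrightarrow> periodic_winding (\<lambda>t. f t * h t) (k + m)"
proof -
  assume "periodic_winding f k" "periodic_winding h m"
  then obtain g1 g2 where
      "continuous_on UNIV g1" "\<And>t. f t = exp (g1 t)"
      "\<And>t. g1 (t + 2*pi) = g1 t + 2 * complex_of_real pi * \<i> * of_int k"
      "continuous_on UNIV g2" "\<And>t. h t = exp (g2 t)"
      "\<And>t. g2 (t + 2*pi) = g2 t + 2 * complex_of_real pi * \<i> * of_int m"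
    unfolding periodic_winding_def by metis
  then show ?thesis unfolding periodic_winding_def
    by (intro exI[of _ "\<lambda>t. g1 t + g2 t"])
       (auto intro!: continuous_intros simp: exp_add algebra_simps)
qed

lemma periodic_winding_cis: "periodic_winding (\<lambda>t. cis (of_int k * t)) k"
  unfolding periodic_winding_def
  by (rule exI[of _ "\<lambda>t. \<i> * of_real (of_int k * t)"])
     (auto intro!: continuous_intros simp: cis_conv_exp algebra_simps)

lemma periodic_winding_Re_cnj_pos:
  assumes "periodic_winding f k" "continuous_on UNIV h" "\<And>t. h (t + 2*pi) = h t"
    and "\<And>t. Re (f t * cnj (h t)) > 0"
  shows "periodic_winding h k"
proof -
  obtain g where g: "continuous_on UNIV g" "\<And>t. f t = exp (g t)"
      "\<And>t. g (t + 2*pi) = g t + 2 * complex_of_real pi * \<i> * of_int k"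
    using assms(1) unfolding periodic_winding_def by blast
  have fnz: "f t \<noteq> 0" for t using g(2) by simp
  have re: "Re (h t / f t) > 0" for t
  proof -
    have "h t / f t = cnj (f t * cnj (h t)) / (of_real (norm (f t))^2)"
      using fnz by (simp add: field_simps complex_norm_square flip: of_real_power)
    then show ?thesis using assms(4)[of t] fnz by (simp add: Re_divide_of_real)
  qed
  have "exp (2 * complex_of_real pi * \<i> * of_int k) = 1"
    using exp_integer_2pi[of "of_int k"] by (simp add: mult_ac)
  then have fper: "f (t + 2*pi) = f t" for t using g(2,3) by (simp add: exp_add)
  have contf: "continuous_on UNIV f"
    using g(1,2) by (metis (no_types, lifting) continuous_on_cong continuous_on_exp)
  define l where "l t = Ln (h t / f t)" for t
  have contl: "continuous_on UNIV l" unfolding l_def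
    by (rule continuous_on_compose2[of "{z. 0 < Re z}" Ln])
       (use re fnz in \<open>auto intro!: continuous_intros contf assms(2) continuous_on_Ln'
                          simp: nonpos_Reals_def\<close>)
  show ?thesis unfolding periodic_winding_def
  proof (intro exI[of _ "\<lambda>t. g t + l t"] conjI allI)
    show "continuous_on UNIV (\<lambda>t. g t + l t)" using g(1) contl by (intro continuous_intros)
  next
    fix t
    have "h t / f t \<noteq> 0" using re[of t] by auto
    then show "h t = exp (g t + l t)" using fnz g(2)[of t] by (simp add: exp_add l_def)
  next
    fix t
    show "g (t + 2 * pi) + l (t + 2 * pi) = g t + l t + 2 * complex_of_real pi * \<i> * of_int k"
      using g(3)[of t] by (simp add: l_def fper assms(3))
  qed
qed

text \<open>A logarithm of the whole homotopy exists because the strip is contractible; its shift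
  by one period is then a continuous integer multiple of 2 pi i, hence constant.\<close>
lemma periodic_winding_homotopic:
  fixes F :: "real \<times> real \<Rightarrow> complex"
  assumes contF: "continuous_on ({0..1} \<times> UNIV) F"
    and nz: "\<And>s t. s \<in> {0..1} \<Longrightarrow> F (s, t) \<noteq> 0"
    and per: "\<And>s t. s \<in> {0..1} \<Longrightarrow> F (s, t + 2*pi) = F (s, t)"
    and s: "s \<in> {0..1}" and s': "s' \<in> {0..1}"
    and wind: "periodic_winding (\<lambda>t. F (s, t)) k"
  shows "periodic_winding (\<lambda>t. F (s', t)) k"
proof -
  let ?S = "{0..1::real} \<times> (UNIV::real set)"
  have "contractible ?S" by (intro convex_imp_contractible convex_Times) auto
  then obtain G where G: "continuous_on ?S G" "\<And>x. x \<in> ?S \<Longrightarrow> F x = exp (G x)"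
    using continuous_logarithm_on_contractible[OF contF] nz by (metis mem_Times_iff prod.collapse)
  obtain c :: int where
    c: "\<And>x. x \<in> ?S \<Longrightarrow> G (fst x, snd x + 2*pi) = G x + 2 * complex_of_real pi * \<i> * of_int c"
  proof (rule continuous_logarithms_differ_by_constant[of ?S G "\<lambda>x. G (fst x, snd x + 2*pi)"])
    show "connected ?S" by (intro convex_connected convex_Times) auto
    show "continuous_on ?S (\<lambda>x. G (fst x, snd x + 2*pi))"
      by (rule continuous_on_compose2[OF G(1)]) (auto intro!: continuous_intros)
    fix x assume "x \<in> ?S"
    then show "exp (G (fst x, snd x + 2 * pi)) = exp (G x)"
      using G(2)[of x] G(2)[of "(fst x, snd x + 2*pi)"] per[of "fst x" "snd x"] by auto
  qed (use G in auto)
  have slice: "continuous_on UNIV (\<lambda>t. G (r, t))" if "r \<in> {0..1}" for r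
    by (rule continuous_on_compose2[OF G(1)]) (use that in \<open>auto intro!: continuous_intros\<close>)
  have "G (s, 0 + 2*pi) = G (s, 0) + 2 * complex_of_real pi * \<i> * of_int k"
    by (rule periodic_winding_logarithm[OF wind slice[OF s]]) (use G(2) s in auto)
  then have "c = k" using c[of "(s, 0)"] s by simp
  then show ?thesis unfolding periodic_winding_def
    by (intro exI[of _ "\<lambda>t. G (s', t)"]) (use slice[OF s'] G(2) c s' in auto)
qed

lemma vec3_nth [simp]: "vec3 a b c $ 1 = a" "vec3 a b c $ 2 = b" "vec3 a b c $ 3 = c"
  by (simp_all add: vec3_def)

lemma vec3_eq_iff: "x = y \<longleftrightarrow> x $ 1 = y $ 1 \<and> x $ 2 = y $ 2 \<and> (x::real^3) $ 3 = y $ 3"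
  by (auto simp: vec_eq_iff forall_3)

lemma inner_vec3: "x \<bullet> y = (x::real^3) $ 1 * y $ 1 + x $ 2 * y $ 2 + x $ 3 * y $ 3"
  by (simp add: inner_vec_def sum_3)

lemma norm_vec3: "norm (x::real^3) = sqrt ((x $ 1)^2 + (x $ 2)^2 + (x $ 3)^2)"
  by (simp add: norm_eq_sqrt_inner inner_vec3 power2_eq_square)

lemma norm_vec3_components [simp]: "norm (vec3 a b c) = sqrt (a^2 + b^2 + c^2)"
  by (simp add: norm_vec3)

lemma has_vector_derivative_vec3:
  assumes "(f has_real_derivative f') (at x within S)" "(g has_real_derivative g') (at x within S)"
    and "(h has_real_derivative h') (at x within S)"
  shows "((\<lambda>t. vec3 (f t) (g t) (h t)) has_vector_derivative vec3 f' g' h') (at x within S)"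
proof -
  have coord: "((\<lambda>t. a t *\<^sub>R v) has_vector_derivative a' *\<^sub>R v) (at x within S)"
    if "(a has_real_derivative a') (at x within S)" for a a' and v :: "real^3"
    using has_vector_derivative_scaleR[OF that has_vector_derivative_const] by simp
  have decomp: "vec3 a b c = a *\<^sub>R vec3 1 0 0 + b *\<^sub>R vec3 0 1 0 + c *\<^sub>R vec3 0 0 1" for a b c
    by (simp add: vec3_eq_iff)
  have "((\<lambda>t. f t *\<^sub>R vec3 1 0 0 + g t *\<^sub>R vec3 0 1 0 + h t *\<^sub>R vec3 0 0 1) has_vector_derivative
      f' *\<^sub>R vec3 1 0 0 + g' *\<^sub>R vec3 0 1 0 + h' *\<^sub>R vec3 0 0 1) (at x within S)"
    by (intro has_vector_derivative_add coord assms)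
  then show ?thesis by (simp only: decomp[symmetric])
qed

text \<open>Reading x and u as complex numbers through their first two coordinates,
  hopf_B (x, u) = x + i u.\<close>
definition hopf_B :: "(real^3) \<times> (real^3) \<Rightarrow> complex" where
  "hopf_B xu = Complex (fst xu $ 1 - snd xu $ 2) (fst xu $ 2 + snd xu $ 1)"

definition hopf_C :: "(real^3) \<times> (real^3) \<Rightarrow> complex" where
  "hopf_C xu = Complex (snd xu $ 3) (fst xu $ 3)"

lemma continuous_on_hopf_B: "continuous_on UNIV hopf_B"
  unfolding hopf_B_def[abs_def] Complex_eq by (intro continuous_intros)

lemma hopf_euler_inv:
  assumes "cos \<nu> = 1 - 2 * r2^2" "sin \<nu> = 2 * r1 * r2"
  shows "hopf_B (euler_inv (a1 + a2) (a1 - a2) \<nu>) = 2 * (of_real r2 * cis a2)^2"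
    and "hopf_C (euler_inv (a1 + a2) (a1 - a2) \<nu>) =
      2 * (of_real r1 * cis a1) * cnj (of_real r2 * cis a2)"
proof -
  have "(cis a2)^2 = cis (2 * a2)" by (simp add: power2_eq_square cis_mult)
  then show "hopf_B (euler_inv (a1 + a2) (a1 - a2) \<nu>) = 2 * (of_real r2 * cis a2)^2"
    unfolding hopf_B_def euler_inv_def Let_def
    apply (simp add: complex_eq_iff power_mult_distrib assms cos_add sin_add cos_diff sin_diff
        sin_double cos_double)
    apply (intro conjI)
    using sin_cos_squared_add[of a1] sin_cos_squared_add[of a2] by algebra+
  show "hopf_C (euler_inv (a1 + a2) (a1 - a2) \<nu>) =
      2 * (of_real r1 * cis a1) * cnj (of_real r2 * cis a2)"
    unfolding hopf_C_def euler_inv_def Let_def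
    by (simp add: complex_eq_iff assms cos_diff sin_diff algebra_simps)
qed

lemma hopf_lmap:
  assumes "z \<in> S3"
  shows "hopf_B (lmap z) = 2 * (snd z)^2" and "hopf_C (lmap z) = 2 * fst z * cnj (snd z)"
proof -
  define r1 where "r1 = norm (fst z)"
  define r2 where "r2 = norm (snd z)"
  have n: "r1^2 + r2^2 = 1" using assms by (cases z) (simp add: S3_def norm_Pair r1_def r2_def)
  then have "r1^2 \<le> 1" using zero_le_power2[of r2] by linarith
  then have r1: "0 \<le> r1" "r1 \<le> 1" using power2_le_imp_le[of r1 1] by (auto simp: r1_def)
  have r2: "r2 = sqrt (1 - r1^2)"
    using n r2_def by (metis add_diff_cancel_left' norm_ge_zero real_sqrt_unique)
  have cos\<nu>: "cos (2 * arccos r1) = 1 - 2 * r2^2"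
    using r1 n by (simp add: cos_double_cos cos_arccos)
  have sin\<nu>: "sin (2 * arccos r1) = 2 * r1 * r2"
    using r1 by (simp add: sin_double sin_arccos r2 cos_arccos)
  have l: "lmap z =
      euler_inv (Arg (fst z) + Arg (snd z)) (Arg (fst z) - Arg (snd z)) (2 * arccos r1)"
    by (simp add: lmap_def r1_def)
  have z1: "fst z = of_real r1 * cis (Arg (fst z))"
    and z2: "snd z = of_real r2 * cis (Arg (snd z))"
    using rcis_cmod_Arg by (simp_all add: r1_def r2_def rcis_def)
  show "hopf_B (lmap z) = 2 * (snd z)^2"
    unfolding l by (subst z2, rule hopf_euler_inv(1)[OF cos\<nu> sin\<nu>])
  show "hopf_C (lmap z) = 2 * fst z * cnj (snd z)"
    unfolding l by (subst z1, subst z2, rule hopf_euler_inv(2)[OF cos\<nu> sin\<nu>])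
qed

lemma vector_derivative_periodic:
  assumes "\<And>t. c (t + 2*pi) = c t" "\<And>t. (c has_vector_derivative c' t) (at t)"
  shows "c' (t + 2*pi) = c' t"
proof -
  have "((c \<circ> (\<lambda>x. x + 2*pi)) has_vector_derivative (1 *\<^sub>R c' (t + 2*pi))) (at t)"
    by (rule vector_diff_chain_at[OF _ assms(2)])
       (auto intro!: derivative_eq_intros simp flip: has_real_derivative_iff_has_vector_derivative)
  moreover have "c \<circ> (\<lambda>x. x + 2*pi) = c" using assms(1) by (auto simp: o_def)
  ultimately have "(c has_vector_derivative c' (t + 2*pi)) (at t)" by simp
  then show ?thesis using vector_derivative_unique_at assms(2) by blast
qed

lemma tangent_lift_periodic:
  assumes "regular_closed_curve_S2 c" shows "tangent_lift c (t + 2*pi) = tangent_lift c t"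
proof -
  obtain c' where c': "\<And>t. (c has_vector_derivative c' t) (at t)"
    using assms unfolding regular_closed_curve_S2_def by blast
  have per: "\<And>t. c (t + 2*pi) = c t" using assms unfolding regular_closed_curve_S2_def by blast
  have "vector_derivative c (at x) = c' x" for x using c' vector_derivative_at by blast
  then show ?thesis
    unfolding tangent_lift_def using vector_derivative_periodic[OF per c'] per by simp
qed

lemma equator_has_vector_derivative:
  "(equator has_vector_derivative vec3 (- sin t) (cos t) 0) (at t)"
  unfolding equator_def[abs_def]
  by (rule has_vector_derivative_vec3) (auto intro!: derivative_eq_intros)

lemma tangent_lift_equator:
  "tangent_lift equator t = (vec3 (cos t) (sin t) 0, vec3 (- sin t) (cos t) 0)"
  using vector_derivative_at[OF equator_has_vector_derivative[of t]]
  by (simp add: tangent_lift_def equator_def)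

lemma hopf_B_nonzero_off_equator_lift:
  assumes "xu \<in> T1S2 - range (tangent_lift equator)" shows "hopf_B xu \<noteq> 0"
proof
  assume B: "hopf_B xu = 0"
  obtain x u where xu: "xu = (x, u)" by fastforce
  have e1: "x $ 1 = u $ 2" and e2: "x $ 2 = - u $ 1"
    using B by (auto simp: hopf_B_def xu complex_eq_iff)
  have "norm x = 1" "x \<bullet> u = 0" "norm u = 1" using assms by (auto simp: T1S2_def S2_def xu)
  then have n1: "(x $ 1)^2 + (x $ 2)^2 + (x $ 3)^2 = 1"
    and n2: "(u $ 1)^2 + (u $ 2)^2 + (u $ 3)^2 = 1"
    and i: "x $ 1 * u $ 1 + x $ 2 * u $ 2 + x $ 3 * u $ 3 = 0"
    by (auto simp: norm_vec3 inner_vec3)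
  have "x $ 3 * u $ 3 = 0" using i e1 e2 by (simp add: algebra_simps)
  moreover have "(x $ 3)^2 = (u $ 3)^2"
    using n1 n2 e1 e2 by (simp add: algebra_simps power2_eq_square)
  ultimately have x3: "x $ 3 = 0" and u3: "u $ 3 = 0" by (auto simp: power2_eq_square)
  then have "(x $ 1)^2 + (x $ 2)^2 = 1" using n1 by simp
  then obtain t where t: "x $ 1 = cos t" "x $ 2 = sin t" using sincos_total_2pi by metis
  have "xu = tangent_lift equator t"
    using t x3 u3 e1 e2 by (auto simp: xu tangent_lift_equator vec3_eq_iff)
  then show False using assms by auto
qed

lemma cos_sin_combinations_eq_0:
  fixes a b t :: real
  assumes "a * cos t + b * sin t = 0" "b * cos t - a * sin t = 0"
  shows "a = 0" "b = 0"
proof -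
  have "a = cos t * (a * cos t + b * sin t) - sin t * (b * cos t - a * sin t)"
    using sin_cos_squared_add[of t] by algebra
  then show "a = 0" using assms by simp
  have "b = sin t * (a * cos t + b * sin t) + cos t * (b * cos t - a * sin t)"
    using sin_cos_squared_add[of t] by algebra
  then show "b = 0" using assms by simp
qed

lemma unit_normal_field_equator:
  assumes "unit_normal_field equator \<eta>"
  obtains \<sigma> where "\<sigma>^2 = 1" "\<And>t. \<eta> t = vec3 0 0 \<sigma>"
proof -
  have pointwise: "\<eta> t $ 1 = 0 \<and> \<eta> t $ 2 = 0 \<and> (\<eta> t $ 3 = 1 \<or> \<eta> t $ 3 = -1)" for t
  proof -
    have "norm (\<eta> t) = 1" "\<eta> t \<bullet> equator t = 0"
      and "\<eta> t \<bullet> vector_derivative equator (at t) = 0"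
      using assms unfolding unit_normal_field_def by auto
    then have rot: "\<eta> t $ 1 * cos t + \<eta> t $ 2 * sin t = 0" "\<eta> t $ 2 * cos t - \<eta> t $ 1 * sin t = 0"
      and norm: "(\<eta> t $ 1)^2 + (\<eta> t $ 2)^2 + (\<eta> t $ 3)^2 = 1"
      using vector_derivative_at[OF equator_has_vector_derivative[of t]]
      by (auto simp: inner_vec3 norm_vec3 equator_def)
    then have "\<eta> t $ 1 = 0" "\<eta> t $ 2 = 0" using cos_sin_combinations_eq_0[OF rot] by auto
    then show ?thesis using norm by (simp add: power2_eq_1_iff)
  qed
  have "(\<lambda>t. complex_of_real (\<eta> t $ 3)) constant_on UNIV"
  proof (rule Ints_valued_continuous_constant[OF connected_UNIV])
    show "continuous_on UNIV (\<lambda>t. complex_of_real (\<eta> t $ 3))"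
      using assms unfolding unit_normal_field_def by (intro continuous_intros) auto
  qed (metis pointwise Ints_1 Ints_minus of_real_1 of_real_minus)
  then obtain c where "\<And>t. complex_of_real (\<eta> t $ 3) = c" unfolding constant_on_def by blast
  then have e3: "\<eta> t $ 3 = \<eta> 0 $ 3" for t by (metis of_real_eq_iff)
  show ?thesis
  proof (rule that[of "\<eta> 0 $ 3"])
    show "(\<eta> 0 $ 3)^2 = 1" using pointwise[of 0] by auto
    show "\<eta> t = vec3 0 0 (\<eta> 0 $ 3)" for t using pointwise[of t] e3[of t] by (simp add: vec3_eq_iff)
  qed
qed

lemma sin_nat_mult_add_2pi: "sin (real n * (t + 2*pi)) = sin (real n * t)"
proof -
  have "real n * (t + 2*pi) = real n * t + 2 * real n * pi" by (simp add: algebra_simps)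
  then show ?thesis by (simp add: sin_add)
qed

lemma cos_nat_mult_add_2pi: "cos (real n * (t + 2*pi)) = cos (real n * t)"
proof -
  have "real n * (t + 2*pi) = real n * t + 2 * real n * pi" by (simp add: algebra_simps)
  then show ?thesis by (simp add: cos_add)
qed

lemma cos_pos_if_abs_le_1:
  fixes x :: real
  assumes "\<bar>x\<bar> \<le> 1" shows "cos x > 0"
  by (rule cos_gt_zero_pi) (use assms pi_gt3 in auto)

lemma mult_sin_mult_pos:
  fixes y e :: real
  assumes "y \<noteq> 0" "\<bar>y\<bar> \<le> 1" "0 < e" "e \<le> 1"
  shows "y * sin (e * y) > 0"
proof -
  have "\<bar>e * y\<bar> \<le> 1" using assms by (simp add: abs_mult mult_le_one)
  then have "sin (e * \<bar>y\<bar>) > 0" using assms pi_gt3 by (intro sin_gt_zero) (auto simp: abs_mult)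
  then show ?thesis using assms(1) by (cases "y > 0") (auto simp: mult_neg_neg)
qed

lemma model_satellite_equator:
  fixes p q :: nat
  assumes \<eta>: "\<And>t. \<eta> t = vec3 0 0 \<sigma>" and \<sigma>: "\<sigma>^2 = 1"
  shows "model_satellite equator \<eta> p q \<epsilon> t =
    vec3 (cos (\<epsilon> * sin (real q * t)) * cos (real p * t))
      (cos (\<epsilon> * sin (real q * t)) * sin (real p * t)) (\<sigma> * sin (\<epsilon> * sin (real q * t)))"
proof -
  define h where "h = \<epsilon> * sin (real q * t)"
  have "norm (h *\<^sub>R \<eta> (real p * t)) = \<bar>h\<bar>" using \<sigma> by (simp add: \<eta> power_mult_distrib)
  moreover have "sin \<bar>h\<bar> / \<bar>h\<bar> = sin h / h" by (cases "h \<ge> 0") auto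
  ultimately show ?thesis using \<sigma>
    by (auto simp: model_satellite_def sphere_exp_def \<eta> equator_def vec3_eq_iff h_def[symmetric])
qed

text \<open>Along the model, h is the latitude, h' its derivative and N the speed.\<close>
lemma hopf_B_model_satellite:
  fixes p q :: nat and \<epsilon> \<sigma> :: real and h h' N :: "real \<Rightarrow> real"
  assumes \<eta>: "\<And>t. \<eta> t = vec3 0 0 \<sigma>" and \<sigma>: "\<sigma>^2 = 1" and p: "p \<ge> 1" and \<epsilon>: "\<bar>\<epsilon>\<bar> \<le> 1"
  defines "h \<equiv> \<lambda>t. \<epsilon> * sin (real q * t)" and "h' \<equiv> \<lambda>t. \<epsilon> * q * cos (real q * t)"
    and "N \<equiv> \<lambda>t. sqrt ((h' t)^2 + (real p * cos (h t))^2)"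
  shows "hopf_B (tangent_lift (model_satellite equator \<eta> p q \<epsilon>) t) =
    cis (real p * t) * Complex (cos (h t) * (N t - real p)) (- h' t * sin (h t)) / of_real (N t)"
proof -
  define x' where "x' t = vec3
      (- sin (h t) * h' t * cos (real p * t) - real p * cos (h t) * sin (real p * t))
      (- sin (h t) * h' t * sin (real p * t) + real p * cos (h t) * cos (real p * t))
      (\<sigma> * cos (h t) * h' t)" for t
  have "\<bar>h t\<bar> \<le> 1" unfolding h_def using \<epsilon> by (simp add: abs_mult mult_le_one)
  then have "cos (h t) > 0" by (rule cos_pos_if_abs_le_1)
  then have N_pos: "N t > 0" unfolding N_def using p by (intro real_sqrt_gt_zero add_nonneg_pos) auto
  have "(model_satellite equator \<eta> p q \<epsilon> has_vector_derivative x' t) (at t)"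
    unfolding model_satellite_equator[OF \<eta> \<sigma>, abs_def] x'_def h_def h'_def
    by (rule has_vector_derivative_vec3) (auto intro!: derivative_eq_intros)
  then have vd: "vector_derivative (model_satellite equator \<eta> p q \<epsilon>) (at t) = x' t"
    by (rule vector_derivative_at)
  have "(x' t $ 1)^2 + (x' t $ 2)^2 + (x' t $ 3)^2 = (h' t)^2 + (real p * cos (h t))^2"
    unfolding x'_def vec3_nth
    using sin_cos_squared_add[of "h t"] sin_cos_squared_add[of "p * t"] \<sigma> by algebra
  then have "norm (x' t) = N t" by (simp add: norm_vec3 N_def)
  then show ?thesis
    unfolding tangent_lift_def vd hopf_B_def model_satellite_equator[OF \<eta> \<sigma>] using N_pos
    by (simp add: x'_def h_def h'_def complex_eq_iff field_simps Re_divide_of_real Im_divide_of_real)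
qed

lemma periodic_winding_ellipse:
  fixes q :: nat and a b :: real
  assumes "a > 0" "b > 0"
  shows "periodic_winding (\<lambda>t. Complex (a * cos (real q * t)) (- b * sin (real q * t))) (- int q)"
proof -
  define K where "K t = Complex (a * cos (real q * t)) (- b * sin (real q * t))" for t
  have "periodic_winding K (- int q)"
  proof (rule periodic_winding_Re_cnj_pos[OF periodic_winding_cis])
    show "continuous_on UNIV K" unfolding K_def Complex_eq by (intro continuous_intros)
    show "K (t + 2 * pi) = K t" for t by (simp add: K_def sin_nat_mult_add_2pi cos_nat_mult_add_2pi)
    fix t
    have "Re (cis (of_int (- int q) * t) * cnj (K t)) =
        a * (cos (real q * t))^2 + b * (sin (real q * t))^2"
      by (simp add: K_def power2_eq_square)
    moreover have "a * (cos (real q * t))^2 + b * (sin (real q * t))^2 > 0"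
    proof (cases "cos (real q * t) = 0")
      case True
      then have "(sin (real q * t))^2 = 1" using sin_cos_squared_add[of "real q * t"] by simp
      then show ?thesis using True assms by simp
    next
      case False
      then show ?thesis using assms by (intro add_pos_nonneg) auto
    qed
    ultimately show "Re (cis (of_int (- int q) * t) * cnj (K t)) > 0" by simp
  qed
  then show ?thesis unfolding K_def .
qed

lemma periodic_winding_model_twist:
  fixes p q :: nat and \<epsilon> :: real
  assumes p: "p \<ge> 1" and q: "q \<ge> 1" and \<epsilon>: "0 < \<epsilon>" "\<epsilon> \<le> 1"
  shows "periodic_winding
    (\<lambda>t. Complex (\<epsilon> * q * cos (real q * t)) (- real p * sin (\<epsilon> * sin (real q * t)))) (- int q)"
proof -
  define H where "H t = Complex (\<epsilon> * q * cos (real q * t)) (- real p * sin (\<epsilon> * sin (real q * t)))"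
    for t
  have "periodic_winding H (- int q)"
  proof (rule periodic_winding_Re_cnj_pos[OF periodic_winding_ellipse[of "\<epsilon> * q" "real p"]])
    show "continuous_on UNIV H" unfolding H_def Complex_eq by (intro continuous_intros)
    show "H (t + 2 * pi) = H t" for t by (simp add: H_def sin_nat_mult_add_2pi cos_nat_mult_add_2pi)
    fix t
    let ?s = "sin (real q * t)" and ?c = "cos (real q * t)"
    have re: "Re (Complex (\<epsilon> * q * ?c) (- real p * ?s) * cnj (H t)) =
        (\<epsilon> * q * ?c)^2 + (real p)^2 * (?s * sin (\<epsilon> * ?s))"
      by (simp add: H_def power2_eq_square algebra_simps)
    show "Re (Complex (\<epsilon> * q * ?c) (- real p * ?s) * cnj (H t)) > 0"
    proof (cases "?s = 0")
      case True
      then have "?c^2 = 1" using sin_cos_squared_add[of "real q * t"] by simp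
      then show ?thesis unfolding re using True \<epsilon> q by (simp add: power_mult_distrib)
    next
      case False
      then have "?s * sin (\<epsilon> * ?s) > 0" using \<epsilon> by (intro mult_sin_mult_pos) auto
      then show ?thesis unfolding re using p by (intro add_nonneg_pos) auto
    qed
  qed (use \<epsilon> q p in auto)
  then show ?thesis unfolding H_def .
qed

lemma hopf_B_model_satellite_untwisted:
  fixes p :: nat and \<epsilon> \<sigma> :: real
  assumes "\<And>t. \<eta> t = vec3 0 0 \<sigma>" "\<sigma>^2 = 1" "p \<ge> 1" "\<bar>\<epsilon>\<bar> \<le> 1"
  shows "hopf_B (tangent_lift (model_satellite equator \<eta> p 0 \<epsilon>) t) = 0"
  by (simp add: hopf_B_model_satellite[OF assms] complex_eq_iff)

lemma model_defect_Re_pos: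
  fixes x y c P :: real
  assumes c: "c > 0" "c^2 + y^2 = 1" and P: "P > 0" and xy: "x \<noteq> 0 \<or> y \<noteq> 0"
  defines "N \<equiv> sqrt (x^2 + (P * c)^2)"
  shows "c * (N - P)^2 * (N + P) + 2 * P * (x * y)^2 > 0"
proof -
  have N: "N > 0" "N^2 = x^2 + (P * c)^2"
    unfolding N_def using c P by (auto intro!: add_nonneg_pos)
  have "0 \<le> c * (N - P)^2 * (N + P)" using c N P by (intro mult_nonneg_nonneg) auto
  moreover have "0 < c * (N - P)^2 * (N + P)" if "x * y = 0"
  proof -
    have "N \<noteq> P"
    proof
      assume "N = P"
      then have "x^2 = P^2 * (1 - c^2)"
        using N(2) by (simp add: power_mult_distrib right_diff_distrib)
      also have "1 - c^2 = y^2" using c(2) by simp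
      finally have "x^2 = (P * y)^2" by (simp add: power_mult_distrib)
      then show False using that xy P by (auto simp: power_mult_distrib)
    qed
    then show ?thesis using c N P by (intro mult_pos_pos) auto
  qed
  ultimately show ?thesis using P by (cases "x * y = 0") (auto intro: add_nonneg_pos add_pos_nonneg)
qed

text \<open>This factor of hopf_B along the model stays within a right angle of H^2, where
  H t = h' t - i p sin (h t) winds like an ellipse.\<close>
lemma periodic_winding_model_defect:
  fixes p q :: nat and \<epsilon> :: real and h h' N :: "real \<Rightarrow> real"
  assumes p: "p \<ge> 1" and q: "q \<ge> 1" and \<epsilon>: "0 < \<epsilon>" "\<epsilon> \<le> 1"
  defines "h \<equiv> \<lambda>t. \<epsilon> * sin (real q * t)" and "h' \<equiv> \<lambda>t. \<epsilon> * q * cos (real q * t)"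
    and "N \<equiv> \<lambda>t. sqrt ((h' t)^2 + (real p * cos (h t))^2)"
  shows "periodic_winding (\<lambda>t. Complex (cos (h t) * (N t - real p)) (- h' t * sin (h t)))
    (- 2 * int q)"
proof -
  define F where "F t = Complex (cos (h t) * (N t - real p)) (- h' t * sin (h t))" for t
  define H where "H t = Complex (h' t) (- real p * sin (h t))" for t
  have "periodic_winding H (- int q)"
    unfolding H_def h_def h'_def by (rule periodic_winding_model_twist[OF p q \<epsilon>])
  then have "periodic_winding (\<lambda>t. H t * H t) (- 2 * int q)"
    using periodic_winding_mult by fastforce
  then have "periodic_winding F (- 2 * int q)"
  proof (rule periodic_winding_Re_cnj_pos)
    show "continuous_on UNIV F" unfolding F_def Complex_eq N_def h_def h'_def
      by (intro continuous_intros)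
    show "F (t + 2 * pi) = F t" for t
      by (simp add: F_def N_def h_def h'_def sin_nat_mult_add_2pi cos_nat_mult_add_2pi)
    fix t
    have "cos (h t) > 0"
      unfolding h_def using \<epsilon> by (intro cos_pos_if_abs_le_1) (simp add: abs_mult mult_le_one)
    moreover have "h' t \<noteq> 0 \<or> sin (h t) \<noteq> 0"
    proof (cases "sin (real q * t) = 0")
      case True
      then have "cos (real q * t) \<noteq> 0" using sin_cos_squared_add[of "real q * t"] by auto
      then show ?thesis using \<epsilon> q by (simp add: h'_def)
    next
      case False
      then have "sin (real q * t) * sin (h t) > 0"
        unfolding h_def using \<epsilon> by (intro mult_sin_mult_pos) auto
      then show ?thesis by auto
    qed
    ultimately have pos:
      "cos (h t) * (N t - real p)^2 * (N t + real p) + 2 * real p * (h' t * sin (h t))^2 > 0"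
      unfolding N_def using p by (intro model_defect_Re_pos) auto
    have "(N t)^2 = (h' t)^2 + (real p)^2 * (cos (h t))^2"
      unfolding N_def by (simp add: power_mult_distrib)
    then have diff_sq: "(h' t)^2 - (real p)^2 * (sin (h t))^2 = (N t - real p) * (N t + real p)"
      using sin_cos_squared_add[of "h t"] by algebra
    have "Re (H t * H t * cnj (F t)) =
        ((h' t)^2 - (real p)^2 * (sin (h t))^2) * (cos (h t) * (N t - real p)) +
        2 * real p * (h' t * sin (h t))^2"
      by (simp add: H_def F_def power2_eq_square algebra_simps)
    also have "\<dots> = cos (h t) * (N t - real p)^2 * (N t + real p) + 2 * real p * (h' t * sin (h t))^2"
      unfolding diff_sq by (simp add: power2_eq_square algebra_simps)
    finally show "Re (H t * H t * cnj (F t)) > 0" using pos by simp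
  qed
  then show ?thesis unfolding F_def .
qed

lemma periodic_winding_model_satellite:
  fixes p q :: nat and \<epsilon> \<sigma> :: real
  assumes \<eta>: "\<And>t. \<eta> t = vec3 0 0 \<sigma>" "\<sigma>^2 = 1"
    and p: "p \<ge> 1" and q: "q \<ge> 1" and \<epsilon>: "0 < \<epsilon>" "\<epsilon> \<le> 1"
  shows "periodic_winding (\<lambda>t. hopf_B (tangent_lift (model_satellite equator \<eta> p q \<epsilon>) t))
    (int p - 2 * int q)"
proof -
  define h where "h t = \<epsilon> * sin (real q * t)" for t
  define h' where "h' t = \<epsilon> * q * cos (real q * t)" for t
  define N where "N t = sqrt ((h' t)^2 + (real p * cos (h t))^2)" for t
  define P where "P t = cis (real p * t) * Complex (cos (h t) * (N t - real p)) (- h' t * sin (h t))"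
    for t
  have "periodic_winding (\<lambda>t. cis (of_int (int p) * t) *
      Complex (cos (h t) * (N t - real p)) (- h' t * sin (h t))) (int p + - 2 * int q)"
    using periodic_winding_mult[OF periodic_winding_cis[of "int p"]
        periodic_winding_model_defect[OF p q \<epsilon>]]
    unfolding h_def h'_def N_def by simp
  then have wP: "periodic_winding P (int p - 2 * int q)" unfolding P_def by simp
  have P_nz: "P t \<noteq> 0" for t using wP unfolding periodic_winding_def by auto
  have "\<bar>h t\<bar> \<le> 1" for t unfolding h_def using \<epsilon> by (simp add: abs_mult mult_le_one)
  then have cos_h: "cos (h t) > 0" for t by (rule cos_pos_if_abs_le_1)
  have N_pos: "N t > 0" for t
    unfolding N_def using cos_h[of t] p by (intro real_sqrt_gt_zero add_nonneg_pos) auto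
  have "\<bar>\<epsilon>\<bar> \<le> 1" using \<epsilon> by simp
  then have B: "hopf_B (tangent_lift (model_satellite equator \<eta> p q \<epsilon>) t) = P t / of_real (N t)"
    for t unfolding P_def N_def h_def h'_def by (rule hopf_B_model_satellite[OF \<eta> p])
  show ?thesis
    unfolding B
  proof (rule periodic_winding_Re_cnj_pos[OF wP])
    have "continuous_on UNIV N" unfolding N_def h_def h'_def by (intro continuous_intros)
    moreover have "continuous_on UNIV P" unfolding P_def N_def h_def h'_def Complex_eq
      by (intro continuous_intros)
    ultimately show "continuous_on UNIV (\<lambda>t. P t / complex_of_real (N t))"
      using N_pos by (intro continuous_intros) (auto simp: dual_order.strict_implies_not_eq)
    show "P (t + 2 * pi) / complex_of_real (N (t + 2 * pi)) = P t / complex_of_real (N t)" for t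
      by (simp add: P_def N_def h_def h'_def cis.ctr sin_nat_mult_add_2pi cos_nat_mult_add_2pi)
    fix t
    have "P t * cnj (P t / complex_of_real (N t)) = complex_of_real ((norm (P t))^2 / N t)"
      by (simp add: complex_norm_square[symmetric] del: of_real_power)
    then show "Re (P t * cnj (P t / complex_of_real (N t))) > 0"
      using P_nz[of t] N_pos[of t] by simp
  qed
qed

lemma periodic_winding_satellite:
  fixes p q :: nat
  assumes p: "p \<ge> 1" and \<eta>: "unit_normal_field equator \<eta>"
    and sat: "is_satellite equator \<eta> p q \<gamma>"
  shows "periodic_winding (\<lambda>t. hopf_B (tangent_lift \<gamma> t)) (int p - 2 * int q)"
proof -
  obtain \<epsilon>0 where \<epsilon>0: "\<epsilon>0 > 0" and homotopic: "\<And>\<epsilon>. 0 < \<epsilon> \<Longrightarrow> \<epsilon> < \<epsilon>0 \<Longrightarrow>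
      lift_homotopic equator \<gamma> (model_satellite equator \<eta> p q \<epsilon>)"
    using sat unfolding is_satellite_def by blast
  define \<epsilon> where "\<epsilon> = min (\<epsilon>0 / 2) 1"
  have \<epsilon>: "0 < \<epsilon>" "\<epsilon> \<le> 1" "\<epsilon> < \<epsilon>0" using \<epsilon>0 by (auto simp: \<epsilon>_def)
  obtain c :: "real \<Rightarrow> real \<Rightarrow> real^3"
    where c0: "c 0 = \<gamma>" and c1: "c 1 = model_satellite equator \<eta> p q \<epsilon>"
    and c_regular: "\<And>s. s \<in> {0..1} \<Longrightarrow> regular_closed_curve_S2 (c s)"
    and c_cont: "continuous_on ({0..1} \<times> UNIV) (\<lambda>(s, t). tangent_lift (c s) t)"
    and c_avoids: "\<And>s t. s \<in> {0..1} \<Longrightarrow> tangent_lift (c s) t \<in> T1S2 - range (tangent_lift equator)"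
    using homotopic[OF \<epsilon>(1,3)] unfolding lift_homotopic_def by blast
  obtain \<sigma> where \<sigma>: "\<sigma>^2 = 1" and \<eta>_vertical: "\<And>t. \<eta> t = vec3 0 0 \<sigma>"
    using unit_normal_field_equator[OF \<eta>] by blast
  define F where "F x = hopf_B ((\<lambda>(s, t). tangent_lift (c s) t) x)" for x
  have F_cont: "continuous_on ({0..1} \<times> UNIV) F"
    unfolding F_def by (rule continuous_on_compose2[OF continuous_on_hopf_B c_cont]) auto
  have F_nz: "F (s, t) \<noteq> 0" if "s \<in> {0..1}" for s t
    unfolding F_def using hopf_B_nonzero_off_equator_lift[OF c_avoids[OF that]] by simp
  have F_per: "F (s, t + 2*pi) = F (s, t)" if "s \<in> {0..1}" for s t
    unfolding F_def using tangent_lift_periodic[OF c_regular[OF that]] by simp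
  have "q \<noteq> 0"
  proof
    assume "q = 0"
    then have "F (1, 0) = 0" using \<epsilon> p
      by (simp add: F_def c1 hopf_B_model_satellite_untwisted[OF \<eta>_vertical \<sigma>])
    with F_nz[of 1 0] show False by simp
  qed
  then have "periodic_winding (\<lambda>t. F (1, t)) (int p - 2 * int q)"
    using periodic_winding_model_satellite[OF \<eta>_vertical \<sigma> p _ \<epsilon>(1,2)] by (simp add: F_def c1)
  then have "periodic_winding (\<lambda>t. F (0, t)) (int p - 2 * int q)"
    using periodic_winding_homotopic[OF F_cont F_nz F_per, of 1 0] by simp
  then show ?thesis by (simp add: F_def c0)
qed

lemma add_shift_iterate:
  fixes g :: "real \<Rightarrow> 'a::real_vector"
  assumes "\<And>t. g (t + c) = g t + d"
  shows "g (t + real n * c) = g t + real n *\<^sub>R d"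
proof (induction n)
  case (Suc n)
  have "t + real (Suc n) * c = (t + real n * c) + c" by (simp add: algebra_simps)
  then show ?case using assms[of "t + real n * c"] Suc.IH by (simp add: algebra_simps)
qed simp

lemma lmap_lift_snd_logarithm:
  assumes \<Gamma>_cont: "continuous_on UNIV \<Gamma>" and \<Gamma>_S3: "\<And>t. \<Gamma> t \<in> S3"
    and lift: "\<And>t. lmap (\<Gamma> t) = tangent_lift c t"
    and wind: "periodic_winding (\<lambda>t. hopf_B (tangent_lift c t)) k"
  obtains g where "continuous_on UNIV g" "\<And>t. snd (\<Gamma> t) = exp (g t)"
    "\<And>t. g (t + 2*pi) = g t + complex_of_real pi * \<i> * of_int k"
proof -
  have B: "hopf_B (tangent_lift c t) = 2 * (snd (\<Gamma> t))^2" for t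
    using hopf_lmap(1)[OF \<Gamma>_S3[of t]] lift[of t] by simp
  have "hopf_B (tangent_lift c t) \<noteq> 0" for t using wind unfolding periodic_winding_def by auto
  then have snd_nz: "snd (\<Gamma> t) \<noteq> 0" for t using B[of t] by auto
  have "continuous_on UNIV (\<lambda>t. snd (\<Gamma> t))" using \<Gamma>_cont by (intro continuous_intros)
  then obtain g where g: "continuous_on UNIV g" "\<And>t. snd (\<Gamma> t) = exp (g t)"
    by (rule continuous_logarithm_on_contractible[OF _ convex_imp_contractible[OF convex_UNIV]])
       (use snd_nz in auto)
  have "exp (complex_of_real (ln 2)) = 2" using exp_of_real[of "ln 2"] by simp
  then have log_B: "hopf_B (tangent_lift c t) = exp (complex_of_real (ln 2) + 2 * g t)" for t
    by (simp only: B g(2) exp_add mult_2 power2_eq_square)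
  have "complex_of_real (ln 2) + 2 * g (t + 2*pi) =
      complex_of_real (ln 2) + 2 * g t + 2 * complex_of_real pi * \<i> * of_int k" for t
    by (rule periodic_winding_logarithm[OF wind _ log_B])
       (use g(1) in \<open>intro continuous_intros\<close>)
  then have two_g: "2 * g (t + 2*pi) = 2 * (g t + complex_of_real pi * \<i> * of_int k)" for t
    by (simp add: algebra_simps)
  have "g (t + 2*pi) = g t + complex_of_real pi * \<i> * of_int k" for t
    using two_g[of t] by (simp only: mult_cancel_left) simp
  with g show thesis by (rule that)
qed

lemma lmap_inj_on_snd:
  assumes "z \<in> S3" "w \<in> S3" "lmap z = lmap w" "snd z = snd w" "snd z \<noteq> 0"
  shows "z = w"
  using hopf_lmap(2)[OF assms(1)] hopf_lmap(2)[OF assms(2)] assms(3-5) by (simp add: prod_eq_iff)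

text \<open>Over one period z2 picks up the factor exp(i pi k) = +-1, so the lift closes up after
  n periods as soon as n k is even.\<close>
lemma lmap_lift_closes_up:
  fixes n :: nat and k m :: int
  assumes \<Gamma>_S3: "\<And>t. \<Gamma> t \<in> S3" and lift: "\<And>t. lmap (\<Gamma> t) = tangent_lift c t"
    and c: "regular_closed_curve_S2 c" and g_exp: "\<And>t. snd (\<Gamma> t) = exp (g t)"
    and g_shift: "\<And>t. g (t + 2*pi) = g t + complex_of_real pi * \<i> * of_int k"
    and nk: "real n * k = 2 * m"
  shows "g (2 * pi * n) = g 0 + 2 * complex_of_real pi * \<i> * of_int m"
    and "\<Gamma> (2 * pi * n) = \<Gamma> 0"
proof -
  have "g (2 * pi * n) = g 0 + real n *\<^sub>R (complex_of_real pi * \<i> * of_int k)"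
    using add_shift_iterate[of g "2*pi", OF g_shift, of 0 n] by (simp add: mult.commute)
  also have "\<dots> = g 0 + complex_of_real pi * \<i> * complex_of_real (real n * k)"
    by (simp add: scaleR_conv_of_real)
  finally show g_n: "g (2 * pi * n) = g 0 + 2 * complex_of_real pi * \<i> * of_int m"
    unfolding nk by simp
  have "tangent_lift c (2 * pi * n) = tangent_lift c 0"
    using add_shift_iterate[of "tangent_lift c" "2*pi" 0, of 0 n] tangent_lift_periodic[OF c]
    by (simp add: mult.commute)
  moreover have "exp (2 * complex_of_real pi * \<i> * of_int m) = 1"
    using exp_integer_2pi[of "of_int m"] by (simp add: mult_ac)
  then have "snd (\<Gamma> (2 * pi * n)) = snd (\<Gamma> 0)" by (simp add: g_exp g_n exp_add)
  ultimately show "\<Gamma> (2 * pi * n) = \<Gamma> 0"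
    using \<Gamma>_S3 lift by (intro lmap_inj_on_snd) (auto simp: g_exp)
qed

text \<open>Radial projection retracts the complement of the plane z2 = 0 onto S3 minus the circle.\<close>
lemma homotopic_loops_S3_minus_circle_if_snd_nonzero:
  fixes \<gamma> \<delta> :: "real \<Rightarrow> complex \<times> complex"
  assumes hom: "homotopic_loops {z. snd z \<noteq> 0} \<gamma> \<delta>"
    and \<gamma>_S3: "\<And>s. s \<in> {0..1} \<Longrightarrow> \<gamma> s \<in> S3" and \<delta>_S3: "\<And>s. s \<in> {0..1} \<Longrightarrow> \<delta> s \<in> S3"
  shows "homotopic_loops (S3 - {(z, 0) | z. norm z = 1}) \<gamma> \<delta>"
proof -
  let ?X = "S3 - {(z, 0) | z. norm z = 1}"
  let ?Y = "{z :: complex \<times> complex. snd z \<noteq> 0}"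
  define nm where "nm z = (1 / norm z) *\<^sub>R z" for z :: "complex \<times> complex"
  have nm_X: "nm z \<in> ?X" if "z \<in> ?Y" for z
  proof -
    have "z \<noteq> 0" using that by (auto simp: zero_prod_def)
    then have "norm (nm z) = 1" "snd (nm z) \<noteq> 0" using that by (auto simp: nm_def)
    then show ?thesis by (force simp: S3_def)
  qed
  have fixed: "homotopic_loops ?X \<alpha> (nm \<circ> \<alpha>)"
    if \<alpha>_hom: "homotopic_loops ?Y \<alpha> \<alpha>" and \<alpha>_S3: "\<And>s. s \<in> {0..1} \<Longrightarrow> \<alpha> s \<in> S3" for \<alpha>
  proof (rule homotopic_loops_eq)
    show "path \<alpha>" "pathfinish \<alpha> = pathstart \<alpha>"
      using \<alpha>_hom homotopic_loops_imp_path homotopic_loops_imp_loop by blast+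
    have "\<alpha> s \<in> ?Y" if "s \<in> {0..1}" for s
      using homotopic_loops_imp_subset[OF \<alpha>_hom] that
      unfolding path_image_def by blast
    then show "path_image \<alpha> \<subseteq> ?X" using \<alpha>_S3 by (auto simp: path_image_def) (metis snd_conv)
    show "\<alpha> t = (nm \<circ> \<alpha>) t" if "t \<in> {0..1}" for t
      using \<alpha>_S3[OF that] by (simp add: nm_def S3_def)
  qed
  have "homotopic_loops ?X (nm \<circ> \<gamma>) (nm \<circ> \<delta>)"
  proof (rule homotopic_loops_continuous_image[OF hom])
    show "continuous_on ?Y nm" unfolding nm_def[abs_def]
      by (intro continuous_intros) (auto simp: zero_prod_def)
  qed (use nm_X in blast)
  moreover have "homotopic_loops ?Y \<gamma> \<gamma>" "homotopic_loops ?Y \<delta> \<delta>"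
    using hom homotopic_loops_refl homotopic_loops_imp_path homotopic_loops_imp_loop
      homotopic_loops_imp_subset by metis+
  ultimately show ?thesis using fixed \<gamma>_S3 \<delta>_S3
    by (meson homotopic_loops_sym homotopic_loops_trans)
qed

text \<open>The straight-line homotopy to the fibre circle (0, sgn z2) keeps z2 nonzero.\<close>
lemma homotopic_loops_S3_minus_circle_to_fibre:
  fixes \<gamma> :: "real \<Rightarrow> complex \<times> complex" and a :: "real \<Rightarrow> real"
  assumes \<gamma>_path: "path \<gamma>" and \<gamma>_loop: "pathfinish \<gamma> = pathstart \<gamma>"
    and a_cont: "continuous_on {0..1} a"
    and \<gamma>_S3: "\<And>s. s \<in> {0..1} \<Longrightarrow> \<gamma> s \<in> S3"
    and \<gamma>_arg: "\<And>s. s \<in> {0..1} \<Longrightarrow> sgn (snd (\<gamma> s)) = cis (a s)"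
  shows "homotopic_loops (S3 - {(z, 0) | z. norm z = 1}) \<gamma> (\<lambda>s. (0, cis (a s)))"
proof (rule homotopic_loops_S3_minus_circle_if_snd_nonzero[OF homotopic_loops_linear])
  show "path (\<lambda>s. (0::complex, cis (a s)))" unfolding path_def by (intro continuous_intros a_cont)
  have "cis (a 1) = cis (a 0)"
    using \<gamma>_arg[of 0] \<gamma>_arg[of 1] \<gamma>_loop by (simp add: pathfinish_def pathstart_def)
  then show "pathfinish (\<lambda>s. (0::complex, cis (a s))) = pathstart (\<lambda>s. (0::complex, cis (a s)))"
    by (simp add: pathfinish_def pathstart_def)
  fix t :: real assume t: "t \<in> {0..1}"
  have snd_nz: "snd (\<gamma> t) \<noteq> 0" using \<gamma>_arg[OF t] cis_neq_zero by fastforce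
  show "closed_segment (\<gamma> t) (0, cis (a t)) \<subseteq> {z. snd z \<noteq> 0}"
  proof
    fix w assume "w \<in> closed_segment (\<gamma> t) (0, cis (a t))"
    then obtain u where u: "0 \<le> u" "u \<le> 1" "w = (1 - u) *\<^sub>R \<gamma> t + u *\<^sub>R (0, cis (a t))"
      unfolding closed_segment_def by auto
    define r where "r = norm (snd (\<gamma> t))"
    have r: "r > 0" using snd_nz by (simp add: r_def)
    have "cis (a t) = snd (\<gamma> t) / of_real r" using \<gamma>_arg[OF t] by (simp add: sgn_eq r_def)
    then have "snd w = complex_of_real ((1 - u) + u / r) * snd (\<gamma> t)"
      using r by (simp add: u scaleR_conv_of_real field_simps)
    moreover have "(1 - u) + u / r > 0"
      using u r by (cases "u = 1") (auto simp: add_pos_nonneg)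
    ultimately show "w \<in> {z. snd z \<noteq> 0}"
      using snd_nz by (simp del: of_real_add of_real_diff of_real_divide)
  qed
qed (use assms in \<open>auto simp: S3_def norm_Pair\<close>)

lemma homotopic_loops_fibre_circle:
  fixes a b :: "real \<Rightarrow> real"
  assumes a_cont: "continuous_on {0..1} a" and b_cont: "continuous_on {0..1} b"
    and a_loop: "cis (a 1) = cis (a 0)" and same_turn: "a 1 - a 0 = b 1 - b 0"
  shows "homotopic_loops (S3 - {(z, 0) | z. norm z = 1})
    (\<lambda>s. (0, cis (a s))) (\<lambda>s. (0, cis (b s)))"
proof -
  define H where "H x = ((0::complex), cis ((1 - fst x) * a (snd x) + fst x * b (snd x)))" for x
  have "continuous_on ({0..1} \<times> {0..1}) (\<lambda>x. a (snd x))"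
    and "continuous_on ({0..1} \<times> {0..1}) (\<lambda>x. b (snd x))"
    by (rule continuous_on_compose2[OF a_cont] continuous_on_compose2[OF b_cont];
        auto intro: continuous_intros)+
  then have "continuous_on ({0..1} \<times> {0..1}) H" unfolding H_def by (intro continuous_intros)
  moreover have "H \<in> {0..1} \<times> {0..1} \<rightarrow> S3 - {(z, 0) |z. norm z = 1}"
    by (auto simp: H_def S3_def norm_Pair)
  moreover have "pathfinish (H \<circ> Pair u) = pathstart (H \<circ> Pair u)" for u
  proof -
    have b1: "b 1 = b 0 + (a 1 - a 0)" using same_turn by simp
    have "(1 - u) * a 1 + u * b 1 = ((1 - u) * a 0 + u * b 0) + (a 1 - a 0)"
      unfolding b1 by (simp add: algebra_simps)
    moreover have "cis (a 1 - a 0) = 1" using a_loop by (simp flip: cis_divide)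
    ultimately have "cis ((1 - u) * a 1 + u * b 1) = cis ((1 - u) * a 0 + u * b 0)"
      by (metis cis_mult mult_1_right)
    then show ?thesis by (simp add: H_def pathfinish_def pathstart_def)
  qed
  ultimately show ?thesis unfolding homotopic_loops by (intro exI[of _ H]) (auto simp: H_def)
qed

lemma homotopic_loops_S3_minus_circle:
  fixes \<gamma> \<delta> :: "real \<Rightarrow> complex \<times> complex" and a b :: "real \<Rightarrow> real"
  assumes "path \<gamma>" "pathfinish \<gamma> = pathstart \<gamma>" "continuous_on {0..1} a"
    and "\<And>s. s \<in> {0..1} \<Longrightarrow> \<gamma> s \<in> S3" "\<And>s. s \<in> {0..1} \<Longrightarrow> sgn (snd (\<gamma> s)) = cis (a s)"
    and "path \<delta>" "pathfinish \<delta> = pathstart \<delta>" "continuous_on {0..1} b"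
    and "\<And>s. s \<in> {0..1} \<Longrightarrow> \<delta> s \<in> S3" "\<And>s. s \<in> {0..1} \<Longrightarrow> sgn (snd (\<delta> s)) = cis (b s)"
    and "a 1 - a 0 = b 1 - b 0"
  shows "homotopic_loops (S3 - {(z, 0) | z. norm z = 1}) \<gamma> \<delta>"
proof -
  have "cis (a 1) = cis (a 0)"
    using assms(2) assms(5)[of 0] assms(5)[of 1] by (simp add: pathfinish_def pathstart_def)
  then show ?thesis
    using homotopic_loops_S3_minus_circle_to_fibre[OF assms(1-5)]
      homotopic_loops_S3_minus_circle_to_fibre[OF assms(6-10)]
      homotopic_loops_fibre_circle[OF assms(3,8) _ assms(11)]
    by (meson homotopic_loops_sym homotopic_loops_trans)
qed

lemma homotopic_loops_S3_minus_circle_torus: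
  fixes \<Gamma> :: "real \<Rightarrow> complex \<times> complex" and g :: "real \<Rightarrow> complex"
    and m :: int and T c1 c2 A :: real
  assumes \<Gamma>_cont: "continuous_on UNIV \<Gamma>" and \<Gamma>_S3: "\<And>t. \<Gamma> t \<in> S3"
    and g_cont: "continuous_on UNIV g" and g_exp: "\<And>t. snd (\<Gamma> t) = exp (g t)"
    and \<Gamma>_T: "\<Gamma> T = \<Gamma> 0" and g_T: "g T = g 0 + 2 * complex_of_real pi * \<i> * of_int m"
    and "c1 > 0" "c2 > 0" "c1^2 + c2^2 = 1" "cis A = 1"
  shows "homotopic_loops (S3 - {(z, 0) | z. norm z = 1}) (\<lambda>s. \<Gamma> (T * s))
    (\<lambda>s. (complex_of_real c1 * cis (A * s), complex_of_real c2 * cis (2 * pi * m * s)))"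
proof (rule homotopic_loops_S3_minus_circle[where a = "\<lambda>s. Im (g (T * s))"
      and b = "\<lambda>s. 2 * pi * m * s"])
  show "path (\<lambda>s. \<Gamma> (T * s))" unfolding path_def
    by (rule continuous_on_compose2[OF \<Gamma>_cont]) (auto intro!: continuous_intros)
  show "continuous_on {0..1} (\<lambda>s. Im (g (T * s)))"
    by (intro continuous_intros continuous_on_compose2[OF g_cont]) auto
  show "sgn (snd (\<Gamma> (T * s))) = cis (Im (g (T * s)))" for s
    by (simp add: g_exp exp_eq_polar sgn_mult sgn_of_real)
qed (use assms in \<open>auto simp: pathfinish_def pathstart_def path_def S3_def norm_Pair
      norm_mult sgn_mult sgn_of_real intro!: continuous_intros\<close>)

theorem mainTheorem1:
  fixes p q :: nat and \<eta> \<gamma>pq :: "real \<Rightarrow> real^3"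
    and \<Gamma> :: "real \<Rightarrow> complex \<times> complex" and c1 c2 :: real
  assumes "p \<ge> 1" and "coprime p q"
    and "unit_normal_field equator \<eta>"
    and "is_satellite equator \<eta> p q \<gamma>pq"
    and "continuous_on UNIV \<Gamma>" and "\<forall>t. \<Gamma> t \<in> S3"
    and "\<forall>t. lmap (\<Gamma> t) = tangent_lift \<gamma>pq t"
    and "c1 > 0" and "c2 > 0" and "c1^2 + c2^2 = 1"
  shows "let T = (if even p then 2*pi else 4*pi) in
     homotopic_loops (S3 - {(z, 0) | z. norm z = 1})
       (\<lambda>s. \<Gamma> (T * s))
       (\<lambda>s. (complex_of_real c1 * cis (real p * (T * s) / 2),
             complex_of_real c2 * cis ((real p - 2 * real q) * (T * s) / 2)))"
proof -
  note \<Gamma>_S3 = assms(6)[rule_format] and lift = assms(7)[rule_format]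
  obtain g where g_cont: "continuous_on UNIV g" and g_exp: "\<And>t. snd (\<Gamma> t) = exp (g t)"
    and g_shift: "\<And>t. g (t + 2*pi) = g t + complex_of_real pi * \<i> * of_int (int p - 2 * int q)"
    using lmap_lift_snd_logarithm[OF assms(5) \<Gamma>_S3 lift periodic_winding_satellite[OF assms(1,3,4)]]
    by blast
  define n :: nat where "n = (if even p then 1 else 2)"
  define T where "T = 2 * pi * real n"
  have "even (int n * (int p - 2 * int q))" "even (n * p)" by (simp_all add: n_def)
  then obtain m :: int and l :: nat where m: "real n * (int p - 2 * int q) = 2 * m"
    and l: "real n * p = 2 * l"
    by (metis evenE of_int_mult of_int_of_nat_eq of_nat_mult of_nat_numeral)
  have "regular_closed_curve_S2 \<gamma>pq" using assms(4) by (simp add: is_satellite_def)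
  note closes_up = lmap_lift_closes_up[OF \<Gamma>_S3 lift this g_exp g_shift m, folded T_def]
  have "real p * T / 2 = 2 * pi * real l" using l unfolding T_def by (simp add: field_simps)
  then have "cis (real p * T / 2) = 1" by (metis cis_multiple_2pi Ints_of_nat)
  note torus = homotopic_loops_S3_minus_circle_torus[OF assms(5) \<Gamma>_S3 g_cont g_exp closes_up(2,1)
      assms(8-10) this]
  have "(real p - 2 * real q) * (T * s) / 2 = 2 * pi * m * s" for s
  proof -
    have "(real p - 2 * real q) * (T * s) / 2 = pi * s * (real n * (real p - 2 * real q))"
      unfolding T_def by (simp add: field_simps)
    also have "\<dots> = 2 * pi * m * s" using m by simp
    finally show ?thesis .
  qed
  moreover have "real p * (T * s) / 2 = real p * T / 2 * s" for s by simp
  moreover have "(if even p then 2*pi else 4*pi) = T" by (simp add: T_def n_def)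
  ultimately show ?thesis using torus unfolding Let_def by (simp only:)
qed

end
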